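(* Let $x_1,x_2,x_3>0$, $\gamma,\delta>0$ with $\gamma\ne1\ne\delta$, and let $$\mathbf{Q}=\begin{pmatrix}1&\delta x_1&x_2&x_3\\ 1/(\delta x_1)&1&x_2/x_1&x_3/x_1\\ 1/x_2&x_1/x_2&1&\gamma x_3/x_2\\ 1/x_3&x_1/x_3&x_2/(\gamma x_3)&1\end{pmatrix}$$ with principal right eigenvector $\mathbf{w}^{EM}$. Then $\gamma>1$ iff $w_3^{EM}/w_4^{EM}<\gamma x_3/x_2$, and $\gamma<1$ iff $w_3^{EM}/w_4^{EM}>\gamma x_3/x_2$.
   Context: The principal right eigenvector is the positive (Perron) eigenvector belonging to the largest eigenvalue. *)

theory Defs
  imports "HOL-Analysis.Analysis"
begin

definition principal_right_eigenvector :: "real^'n^'n \<Rightarrow> real^'n \<Rightarrow> bool" where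
  "principal_right_eigenvector A w \<longleftrightarrow>
     (\<forall>i. w $ i > 0) \<and>
     (\<exists>lam. A *v w = lam *\<^sub>R w \<and>
        (\<forall>mu v. v \<noteq> 0 \<and> A *v v = mu *\<^sub>R v \<longrightarrow> mu \<le> lam))"

text \<open>The 4x4 matrix Q; rows/columns are indexed 1,2,3,4 (in the type 4, index 4 = 0).\<close>
definition Qmat :: "real \<Rightarrow> real \<Rightarrow> real \<Rightarrow> real \<Rightarrow> real \<Rightarrow> real^4^4" where
  "Qmat x1 x2 x3 \<gamma> \<delta> = vector [
     vector [1, \<delta> * x1, x2, x3],
     vector [1 / (\<delta> * x1), 1, x2 / x1, x3 / x1],
     vector [1 / x2, x1 / x2, 1, \<gamma> * x3 / x2],
     vector [1 / x3, x1 / x3, x2 / (\<gamma> * x3), 1]]"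

lemma Qmat_check: "Qmat x1 x2 x3 g d $ 3 $ 4 = g * x3 / x2"
  "Qmat x1 x2 x3 g d $ 4 $ 3 = x2 / (g * x3)" "Qmat x1 x2 x3 g d $ 1 $ 2 = d * x1"
  by (simp_all add: Qmat_def vector_def)

end

theory Submission
  imports Defs
begin

text \<open>With
  \<open>c = \<gamma> x\<^sub>3 / x\<^sub>2\<close> and \<open>S = (w\<^sub>1 + x\<^sub>1 w\<^sub>2) / x\<^sub>2 > 0\<close>, row 3 reads
  \<open>S + w\<^sub>3 + c w\<^sub>4 = \<lambda> w\<^sub>3\<close> and row 4, multiplied by \<open>c\<close>, reads
  \<open>\<gamma> S + w\<^sub>3 + c w\<^sub>4 = \<lambda> c w\<^sub>4\<close>. Subtracting gives
  \<open>\<lambda> (w\<^sub>3 - c w\<^sub>4) = (1 - \<gamma>) S\<close>, and since the Perron eigenvalue \<open>\<lambda>\<close> of a positive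
  matrix is positive, \<open>w\<^sub>3 / w\<^sub>4 - c\<close> has the sign of \<open>1 - \<gamma>\<close>.\<close>

lemma principal_right_eigenvectorE:
  assumes "principal_right_eigenvector A w"
  obtains lam where "\<And>i. w $ i > 0" and "A *v w = lam *\<^sub>R w"
  using assms unfolding principal_right_eigenvector_def by blast

lemma eigenvalue_pos_if_positive_matrix:
  fixes A :: "real^'n^'n"
  assumes "\<And>i j. A $ i $ j > 0" and "\<And>i. w $ i > 0" and "A *v w = lam *\<^sub>R w"
  shows "lam > 0"
proof -
  fix i :: 'n
  have "(A *v w) $ i > 0"
    unfolding matrix_vector_mult_def using assms(1,2)
    by (simp add: sum_pos mult_pos_pos)
  then have "lam * w $ i > 0"
    using assms(3) by simp
  then show ?thesis
    using assms(2)[of i] by (simp add: zero_less_mult_iff)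
qed

lemma Qmat_positive:
  assumes "x1 > 0" "x2 > 0" "x3 > 0" "\<gamma> > 0" "\<delta> > 0"
  shows "Qmat x1 x2 x3 \<gamma> \<delta> $ i $ j > 0"
  using assms exhaust_4[of i] exhaust_4[of j]
  by (auto simp: Qmat_def vector_def)

lemma Qmat_mult_vec_3:
  "(Qmat x1 x2 x3 \<gamma> \<delta> *v w) $ 3 = w$1 / x2 + x1 / x2 * w$2 + w$3 + \<gamma> * x3 / x2 * w$4"
  by (simp add: matrix_vector_mult_def sum_4 Qmat_def vector_def)

lemma Qmat_mult_vec_4:
  "(Qmat x1 x2 x3 \<gamma> \<delta> *v w) $ 4 = w$1 / x3 + x1 / x3 * w$2 + x2 / (\<gamma> * x3) * w$3 + w$4"
  by (simp add: matrix_vector_mult_def sum_4 Qmat_def vector_def)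

lemma Qmat_eigenvector_identity:
  assumes "x2 \<noteq> 0" "x3 \<noteq> 0" "\<gamma> \<noteq> 0"
    and "Qmat x1 x2 x3 \<gamma> \<delta> *v w = lam *\<^sub>R w"
  shows "lam * (w$3 - \<gamma> * x3 / x2 * w$4) = (1 - \<gamma>) * ((w$1 + x1 * w$2) / x2)"
proof -
  define c S where "c = \<gamma> * x3 / x2" and "S = (w$1 + x1 * w$2) / x2"
  have row3: "S + w$3 + c * w$4 = lam * w$3"
    using arg_cong[OF assms(4), of "\<lambda>v. v $ 3"]
    by (simp add: Qmat_mult_vec_3 c_def S_def add_divide_distrib)
  have "\<gamma> * S + w$3 + c * w$4 = c * (w$1 / x3 + x1 / x3 * w$2 + x2 / (\<gamma> * x3) * w$3 + w$4)"
    using assms(1-3) by (simp add: c_def S_def field_simps)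
  also have "\<dots> = c * (lam * w$4)"
    using arg_cong[OF assms(4), of "\<lambda>v. v $ 4"] by (simp add: Qmat_mult_vec_4)
  also have "\<dots> = lam * (c * w$4)"
    by (rule mult.left_commute)
  finally have row4: "\<gamma> * S + w$3 + c * w$4 = lam * (c * w$4)" .
  show ?thesis
    using row3 row4 by (simp add: c_def [symmetric] S_def [symmetric] algebra_simps)
qed

theorem mainTheorem16:
  fixes x1 x2 x3 \<gamma> \<delta> :: real and w :: "real^4"
  assumes "x1 > 0" "x2 > 0" "x3 > 0" "\<gamma> > 0" "\<delta> > 0" "\<gamma> \<noteq> 1" "\<delta> \<noteq> 1"
    and "principal_right_eigenvector (Qmat x1 x2 x3 \<gamma> \<delta>) w"
  shows "(\<gamma> > 1 \<longleftrightarrow> w $ 3 / w $ 4 < \<gamma> * x3 / x2) \<and>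
         (\<gamma> < 1 \<longleftrightarrow> w $ 3 / w $ 4 > \<gamma> * x3 / x2)"
proof -
  obtain lam where pos: "\<And>i. w $ i > 0" and ev: "Qmat x1 x2 x3 \<gamma> \<delta> *v w = lam *\<^sub>R w"
    using principal_right_eigenvectorE[OF assms(8)] by blast
  have "lam > 0"
    using eigenvalue_pos_if_positive_matrix[OF Qmat_positive pos ev] assms(1-5) by simp
  moreover have "(w$1 + x1 * w$2) / x2 > 0"
    using assms(1,2) pos[of 1] pos[of 2] by (intro divide_pos_pos add_pos_pos mult_pos_pos)
  moreover have "lam * (w$3 - \<gamma> * x3 / x2 * w$4) = (1 - \<gamma>) * ((w$1 + x1 * w$2) / x2)"
    using Qmat_eigenvector_identity[OF _ _ _ ev] assms(2-4) by simp
  ultimately have "sgn (w$3 - \<gamma> * x3 / x2 * w$4) = sgn (1 - \<gamma>)"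
    by (metis sgn_mult sgn_pos mult_1 mult_1_right)
  moreover have "w$3 - \<gamma> * x3 / x2 * w$4 = w$4 * (w$3 / w$4 - \<gamma> * x3 / x2)"
    using pos[of 4] by (simp add: field_simps)
  ultimately have "sgn (w$3 / w$4 - \<gamma> * x3 / x2) = sgn (1 - \<gamma>)"
    using pos[of 4] by (simp add: sgn_mult)
  then show ?thesis
    by (auto simp: sgn_if split: if_splits)
qed

end
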